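(* Let $X_{\Omega_-}$ and $X_{\Omega_+}$ be concave toric domains in $\mathbb{R}^4$. Suppose that for every pair of relatively prime positive integers $a,b>0$ we have $[(a,b)]_{\Omega_-}\le[(a,b)]_{\Omega_+}$. Then $\Omega_-\subset\Omega_+$.
   Context: Let $\mu:\mathbb{C}^2\to\mathbb{R}^2_{\ge0}$, $\mu(z_1,z_2)=(\pi|z_1|^2,\pi|z_2|^2)$. Let $\Omega\subset\mathbb{R}^2_{\ge0}$ be compact with $0\in\operatorname{int}(\Omega)$, whose boundary consists of the segment from $(0,0)$ to $(a(\Omega),0)$, the segment from $(0,0)$ to $(0,b(\Omega))$ (with $a(\Omega),b(\Omega)>0$), and a continuous curve $\partial_+\Omega$ from $(a(\Omega),0)$ to $(0,b(\Omega))$ meeting the axes only at its endpoints. $X_\Omega=\mu^{-1}(\Omega)$ is a concave toric domain if $\mathbb{R}^2_{\ge0}\setminus\Omega$ is convex. For $(a,b)\in\mathbb{Z}^2_{\ge0}$, $[(a,b)]_\Omega=\min\{ax+by:(x,y)\in\partial_+\Omega\}$ (in the paper this quantity is the $\Omega$-action $\mathcal{A}_\Omega(e_{a,b})$). *)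

theory Defs
  imports "HOL-Analysis.Analysis"
begin

definition quadrant :: "(real \<times> real) set" where
  "quadrant = {p. fst p \<ge> 0 \<and> snd p \<ge> 0}"

definition toric_region :: "(real \<times> real) set \<Rightarrow> bool" where
  "toric_region \<Omega> \<longleftrightarrow>
     compact \<Omega> \<and> \<Omega> \<subseteq> quadrant \<and>
     (\<exists>e>0. ball (0,0) e \<inter> quadrant \<subseteq> \<Omega>) \<and>
     (\<exists>a b \<gamma>. a > 0 \<and> b > 0 \<and> path \<gamma> \<and>
        pathstart \<gamma> = (a, 0) \<and> pathfinish \<gamma> = (0, b) \<and>
        (\<forall>t\<in>{0<..<1}. fst (\<gamma> t) > 0 \<and> snd (\<gamma> t) > 0) \<and>
        frontier \<Omega> = closed_segment (0,0) (a,0) \<union> closed_segment (0,0) (0,b)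
                        \<union> path_image \<gamma>)"

definition concave_toric_region :: "(real \<times> real) set \<Rightarrow> bool" where
  "concave_toric_region \<Omega> \<longleftrightarrow> toric_region \<Omega> \<and> convex (quadrant - \<Omega>)"

text \<open>The curve part \<partial>_+\<Omega> of the boundary: the closure of the part of the frontier
  lying in the open quadrant (for admissible \<Omega> this is exactly the image of the curve).\<close>

definition plus_boundary :: "(real \<times> real) set \<Rightarrow> (real \<times> real) set" where
  "plus_boundary \<Omega> = closure (frontier \<Omega> \<inter> {p. fst p > 0 \<and> snd p > 0})"

definition omega_action :: "(real \<times> real) set \<Rightarrow> nat \<Rightarrow> nat \<Rightarrow> real" where
  "omega_action \<Omega> a b = Inf ((\<lambda>p. real a * fst p + real b * snd p) ` plus_boundary \<Omega>)"

end

(*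
  Let p be a point of Omega- in the open quadrant and suppose p is not in Omega+.
  Since the complement of Omega- in the quadrant is convex, Omega- is down-closed, so
  C = closure (quadrant - Omega-) is a closed convex set, containing the curve part of
  the boundary of Omega-, that misses every point strictly below p. The segment from a
  small multiple of p to p leaves Omega+ through a point r of its curve boundary strictly
  below p. A line separating r from C has a nonnegative normal vector w, because C is
  stable under translation by the quadrant. Rounding a large multiple of w up to positive
  integers and dividing by their gcd gives coprime a, b > 0 with
  [(a,b)] of Omega- > a r_1 + b r_2 >= [(a,b)] of Omega+, a contradiction.
  A point of Omega- on an axis lies below an endpoint of the curve boundary, which is a
  limit of points of Omega- in the open quadrant; so it lies in Omega+ because Omega+
  is closed and down-closed.
*)
theory Submission
  imports Defs
begin

abbreviation open_quadrant :: "(real \<times> real) set" where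
  "open_quadrant \<equiv> {p. 0 < fst p \<and> 0 < snd p}"

lemma mem_quadrant_iff: "p \<in> quadrant \<longleftrightarrow> 0 \<le> p"
  by (simp add: quadrant_def less_eq_prod_def)

lemma interior_quadrant: "interior quadrant = open_quadrant"
proof -
  have halfspaces: "quadrant = {x. (1, 0) \<bullet> x \<ge> 0} \<inter> {x. (0, 1) \<bullet> x \<ge> (0::real)}"
    by (auto simp: quadrant_def inner_prod_def)
  have "interior quadrant = {x. (1, 0) \<bullet> x > 0} \<inter> {x. (0, 1) \<bullet> x > (0::real)}"
    unfolding halfspaces interior_Int by (subst (1 2) interior_halfspace_ge) (auto simp: zero_prod_def)
  then show ?thesis
    by (auto simp: inner_prod_def)
qed

lemma toric_region_closed: "toric_region \<Omega> \<Longrightarrow> closed \<Omega>"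
  by (simp add: toric_region_def compact_imp_closed)

lemma toric_region_bounded: "toric_region \<Omega> \<Longrightarrow> bounded \<Omega>"
  by (simp add: toric_region_def compact_imp_bounded)

lemma toric_region_subset_quadrant: "toric_region \<Omega> \<Longrightarrow> \<Omega> \<subseteq> quadrant"
  by (simp add: toric_region_def)

lemma concave_toric_region_down_closed:
  assumes concave: "concave_toric_region \<Omega>" and "q \<in> \<Omega>" "0 \<le> p" "p \<le> q"
  shows "p \<in> \<Omega>"
proof (rule ccontr)
  assume "p \<notin> \<Omega>"
  have "convex (quadrant - \<Omega>)" and "bounded \<Omega>"
    using concave by (auto simp: concave_toric_region_def toric_region_bounded)
  then obtain R where R: "\<And>x. x \<in> \<Omega> \<Longrightarrow> norm x \<le> R"
    by (auto simp: bounded_iff)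
  have "p \<noteq> q"
    using \<open>p \<notin> \<Omega>\<close> \<open>q \<in> \<Omega>\<close> by auto
  then have "norm (q - p) > 0"
    by simp
  define L where "L = max 1 ((R + norm p + 1) / norm (q - p))"
  have "L \<ge> 1" and "L * norm (q - p) \<ge> R + norm p + 1"
    using \<open>norm (q - p) > 0\<close> by (auto simp: L_def field_simps max_def)
  \<comment> \<open>q lies on the segment from p to a point y of the quadrant too far out to lie in \<Omega>\<close>
  define y where "y = p + L *\<^sub>R (q - p)"
  have "norm y \<ge> L * norm (q - p) - norm p"
    using norm_triangle_ineq2[of "L *\<^sub>R (q - p)" "-p"] \<open>L \<ge> 1\<close> by (simp add: y_def add.commute)
  then have "y \<notin> \<Omega>"
    using R[of y] \<open>L * norm (q - p) \<ge> R + norm p + 1\<close> by linarith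
  moreover have "0 \<le> y"
    using \<open>0 \<le> p\<close> \<open>p \<le> q\<close> \<open>L \<ge> 1\<close> by (simp add: y_def less_eq_prod_def)
  ultimately have "(1 - 1/L) *\<^sub>R p + (1/L) *\<^sub>R y \<in> quadrant - \<Omega>"
    using \<open>convex (quadrant - \<Omega>)\<close> \<open>p \<notin> \<Omega>\<close> \<open>0 \<le> p\<close> \<open>L \<ge> 1\<close>
    by (intro convexD) (auto simp: mem_quadrant_iff)
  moreover have "(1 - 1/L) *\<^sub>R p + (1/L) *\<^sub>R y = q"
    using \<open>L \<ge> 1\<close> by (simp add: y_def algebra_simps)
  ultimately show False
    using \<open>q \<in> \<Omega>\<close> by simp
qed

lemma below_point_not_in_closure_complement:
  assumes "concave_toric_region \<Omega>" "p \<in> \<Omega>" "fst r < fst p" "snd r < snd p"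
  shows "r \<notin> closure (quadrant - \<Omega>)"
proof -
  let ?B = "{x. fst x < fst p \<and> snd x < snd p}"
  have "open ?B"
    by (intro open_Collect_conj open_Collect_less continuous_intros)
  moreover have "?B \<inter> (quadrant - \<Omega>) = {}"
    using concave_toric_region_down_closed[OF assms(1,2)]
    by (auto simp: mem_quadrant_iff less_eq_prod_def)
  ultimately have "?B \<inter> closure (quadrant - \<Omega>) = {}"
    by (simp add: open_Int_closure_eq_empty)
  then show ?thesis
    using assms(3,4) by blast
qed

lemma plus_boundary_subset_frontier: "plus_boundary \<Omega> \<subseteq> frontier \<Omega>"
  unfolding plus_boundary_def by (simp add: closure_minimal)

lemma plus_boundary_subset_quadrant:
  assumes "toric_region \<Omega>"
  shows "plus_boundary \<Omega> \<subseteq> quadrant"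
  using plus_boundary_subset_frontier frontier_subset_closed[OF toric_region_closed[OF assms]]
    toric_region_subset_quadrant[OF assms] by blast

lemma plus_boundary_subset_closure_complement:
  "plus_boundary \<Omega> \<subseteq> closure (quadrant - \<Omega>)"
proof -
  have "frontier \<Omega> \<inter> open_quadrant \<subseteq> open_quadrant \<inter> closure (- \<Omega>)"
    by (auto simp: frontier_def closure_interior)
  also have "\<dots> \<subseteq> closure (open_quadrant \<inter> - \<Omega>)"
    by (intro open_Int_closure_subset open_Collect_conj open_Collect_less continuous_intros)
  also have "\<dots> \<subseteq> closure (quadrant - \<Omega>)"
    by (rule closure_mono) (auto simp: quadrant_def)
  finally show ?thesis
    unfolding plus_boundary_def by (simp add: closure_minimal)
qed

lemma plus_boundary_nonempty:
  assumes "toric_region \<Omega>"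
  shows "plus_boundary \<Omega> \<noteq> {}"
proof -
  obtain a b \<gamma> where inside: "\<forall>t\<in>{0<..<1}. 0 < fst (\<gamma> t) \<and> 0 < snd (\<gamma> t)"
    and frontier: "frontier \<Omega> = closed_segment (0,0) (a,0) \<union> closed_segment (0,0) (0,b) \<union> path_image \<gamma>"
    using assms unfolding toric_region_def by blast
  have "\<gamma> (1/2) \<in> frontier \<Omega> \<inter> open_quadrant"
    using inside by (auto simp: frontier path_image_def)
  then show ?thesis
    unfolding plus_boundary_def using closure_subset by blast
qed

lemma toric_region_plus_boundary_below:
  assumes region: "toric_region \<Omega>" and "p \<in> open_quadrant" "p \<notin> \<Omega>"
  shows "\<exists>r\<in>plus_boundary \<Omega>. fst r < fst p \<and> snd r < snd p"
proof -
  obtain e where "e > 0" and ball: "ball 0 e \<inter> quadrant \<subseteq> \<Omega>"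
    using region unfolding toric_region_def zero_prod_def by blast
  have "norm p > 0"
    using \<open>p \<in> open_quadrant\<close> by auto
  define s where "s = min 1 (e / (2 * norm p))"
  have s: "0 < s" "s \<le> 1" "s * norm p < e"
    using \<open>e > 0\<close> \<open>norm p > 0\<close> by (auto simp: s_def min_def field_simps)
  have "s *\<^sub>R p \<in> ball 0 e"
    using s by simp
  moreover have "s *\<^sub>R p \<in> quadrant"
    using s \<open>p \<in> open_quadrant\<close> by (simp add: quadrant_def)
  ultimately have "s *\<^sub>R p \<in> \<Omega>"
    using ball by blast
  then obtain q where q: "q \<in> closed_segment (s *\<^sub>R p) p" "q \<in> frontier \<Omega>"
    using connected_Int_frontier[of "closed_segment (s *\<^sub>R p) p" \<Omega>] \<open>p \<notin> \<Omega>\<close> by blast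
  then obtain u where u: "0 \<le> u" "u \<le> 1" "q = (1 - u) *\<^sub>R (s *\<^sub>R p) + u *\<^sub>R p"
    by (auto simp: in_segment)
  define t where "t = (1 - u) * s + u"
  have q_eq: "q = t *\<^sub>R p"
    using u(3) by (simp add: t_def scaleR_add_left)
  have "0 < t"
    using u s by (cases "u = 1") (auto simp: t_def add_pos_nonneg)
  have "t \<le> 1"
    using u s mult_left_le[of s "1 - u"] by (simp add: t_def)
  moreover have "t \<noteq> 1"
    using q_eq q(2) \<open>p \<notin> \<Omega>\<close> frontier_subset_closed[OF toric_region_closed[OF region]] by auto
  ultimately have "t < 1"
    by simp
  have "q \<in> open_quadrant" "fst q < fst p" "snd q < snd p"
    using \<open>0 < t\<close> \<open>t < 1\<close> \<open>p \<in> open_quadrant\<close> by (simp_all add: q_eq)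
  moreover have "q \<in> plus_boundary \<Omega>"
    unfolding plus_boundary_def
    using q(2) \<open>q \<in> open_quadrant\<close> closure_subset[of "frontier \<Omega> \<inter> open_quadrant"] by blast
  ultimately show ?thesis
    by blast
qed

lemma nonneg_if_bounded_below_on_ray:
  fixes c w \<beta> :: real
  assumes "\<And>t. 0 \<le> t \<Longrightarrow> \<beta> < c + t * w"
  shows "0 \<le> w"
proof (rule ccontr)
  assume "\<not> 0 \<le> w"
  then have "0 \<le> (c - \<beta>) / - w"
    using assms[of 0] by (simp add: divide_nonneg_neg)
  from assms[OF this] \<open>\<not> 0 \<le> w\<close> show False
    by simp
qed

lemma nonneg_weights_if_bounded_below_above:
  fixes w1 w2 \<beta> :: real
  assumes above: "\<And>x. z \<le> x \<Longrightarrow> \<beta> < w1 * fst x + w2 * snd x"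
  shows "0 \<le> w1" "0 \<le> w2"
proof -
  let ?c = "w1 * fst z + w2 * snd z"
  show "0 \<le> w1"
  proof (rule nonneg_if_bounded_below_on_ray)
    show "\<beta> < ?c + t * w1" if "0 \<le> t" for t
      using above[of "z + (t, 0)"] that by (simp add: less_eq_prod_def algebra_simps)
  qed
  show "0 \<le> w2"
  proof (rule nonneg_if_bounded_below_on_ray)
    show "\<beta> < ?c + t * w2" if "0 \<le> t" for t
      using above[of "z + (0, t)"] that by (simp add: less_eq_prod_def algebra_simps)
  qed
qed

lemma concave_toric_region_complement_contains_orthant:
  assumes concave: "concave_toric_region \<Omega>"
  obtains z where "\<And>x. z \<le> x \<Longrightarrow> x \<in> quadrant - \<Omega>"
proof -
  have "bounded \<Omega>"
    using concave by (simp add: concave_toric_region_def toric_region_bounded)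
  then obtain R where R: "\<And>x. x \<in> \<Omega> \<Longrightarrow> norm x \<le> R"
    by (auto simp: bounded_iff)
  define z where "z = (\<bar>R\<bar> + 1, \<bar>R\<bar> + 1)"
  have "\<bar>R\<bar> + 1 \<le> norm z"
    using norm_fst_le[of "\<bar>R\<bar> + 1" "\<bar>R\<bar> + 1"] by (simp add: z_def)
  then have "z \<notin> \<Omega>"
    using R[of z] by linarith
  have "0 \<le> z"
    by (simp add: z_def less_eq_prod_def)
  show ?thesis
  proof (rule that)
    fix x
    assume "z \<le> x"
    then have "0 \<le> x"
      using \<open>0 \<le> z\<close> by (rule order_trans[rotated])
    moreover have "x \<notin> \<Omega>"
      using concave_toric_region_down_closed[OF concave _ \<open>0 \<le> z\<close> \<open>z \<le> x\<close>] \<open>z \<notin> \<Omega>\<close> by blast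
    ultimately show "x \<in> quadrant - \<Omega>"
      by (simp add: mem_quadrant_iff)
  qed
qed

lemma separate_from_closure_complement_nonneg:
  assumes concave: "concave_toric_region \<Omega>" and "r \<notin> closure (quadrant - \<Omega>)"
  obtains w1 w2 \<beta> where "0 \<le> w1" "0 \<le> w2" "w1 * fst r + w2 * snd r < \<beta>"
    "\<And>x. x \<in> closure (quadrant - \<Omega>) \<Longrightarrow> \<beta> < w1 * fst x + w2 * snd x"
proof -
  let ?C = "closure (quadrant - \<Omega>)"
  have "convex ?C"
    using concave by (simp add: concave_toric_region_def)
  then obtain w \<beta> where sep: "inner w r < \<beta>" "\<forall>x\<in>?C. \<beta> < inner w x"
    using separating_hyperplane_closed_point[of ?C r] \<open>r \<notin> ?C\<close> by blast
  obtain w1 w2 where w: "w = (w1, w2)"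
    by (cases w)
  have sep_C: "\<beta> < w1 * fst x + w2 * snd x" if "x \<in> ?C" for x
    using sep(2) that by (simp add: w inner_prod_def)
  obtain z where "\<And>x. z \<le> x \<Longrightarrow> x \<in> quadrant - \<Omega>"
    using concave_toric_region_complement_contains_orthant[OF concave] by blast
  then have above: "\<beta> < w1 * fst x + w2 * snd x" if "z \<le> x" for x
    using sep_C closure_subset[of "quadrant - \<Omega>"] that by blast
  have "0 \<le> w1"
    using above by (rule nonneg_weights_if_bounded_below_above(1))
  moreover have "0 \<le> w2"
    using above by (rule nonneg_weights_if_bounded_below_above(2))
  moreover have "w1 * fst r + w2 * snd r < \<beta>"
    using sep(1) by (simp add: w inner_prod_def)
  ultimately show ?thesis
    using sep_C by (rule that)
qed

lemma pos_nat_approx_from_above: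
  fixes x :: real
  assumes "0 \<le> x"
  obtains a :: nat where "0 < a" "x \<le> real a" "real a \<le> x + 1"
proof
  have "real (nat \<lfloor>x\<rfloor> + 1) = of_int \<lfloor>x\<rfloor> + 1"
    using assms by simp
  then show "x \<le> real (nat \<lfloor>x\<rfloor> + 1)" "real (nat \<lfloor>x\<rfloor> + 1) \<le> x + 1"
    by linarith+
qed simp

lemma positive_integer_weights_separate:
  fixes w1 w2 \<beta> :: real and S :: "(real \<times> real) set"
  assumes "0 \<le> w1" "0 \<le> w2" "0 \<le> r" "w1 * fst r + w2 * snd r < \<beta>"
    and S: "\<And>c. c \<in> S \<Longrightarrow> 0 \<le> c \<and> \<beta> \<le> w1 * fst c + w2 * snd c"
  obtains a b :: nat and K where "0 < a" "0 < b"
    "\<And>c. c \<in> S \<Longrightarrow> K \<le> real a * fst c + real b * snd c"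
    "real a * fst r + real b * snd r < K"
proof -
  define g where "g = \<beta> - (w1 * fst r + w2 * snd r)"
  have "g > 0"
    using assms(4) by (simp add: g_def)
  obtain n :: nat where "(fst r + snd r) / g < n"
    using reals_Archimedean2 by blast
  define N where "N = real (Suc n)"
  have "fst r + snd r < N * g"
    using \<open>(fst r + snd r) / g < n\<close> \<open>g > 0\<close> by (simp add: N_def pos_divide_less_eq distrib_right)
  have "1 \<le> N"
    by (simp add: N_def)
  \<comment> \<open>rounding N w up to integers costs at most fst r + snd r < N g at r\<close>
  obtain a :: nat where a: "0 < a" "N * w1 \<le> a" "a \<le> N * w1 + 1"
    using pos_nat_approx_from_above[of "N * w1"] \<open>0 \<le> w1\<close> \<open>1 \<le> N\<close> by auto
  obtain b :: nat where b: "0 < b" "N * w2 \<le> b" "b \<le> N * w2 + 1"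
    using pos_nat_approx_from_above[of "N * w2"] \<open>0 \<le> w2\<close> \<open>1 \<le> N\<close> by auto
  show ?thesis
  proof (rule that[of a b "N * \<beta>"])
    show "N * \<beta> \<le> real a * fst c + real b * snd c" if "c \<in> S" for c
    proof -
      have "0 \<le> fst c" "0 \<le> snd c" "\<beta> \<le> w1 * fst c + w2 * snd c"
        using S[OF that] by (auto simp: less_eq_prod_def)
      then have "N * \<beta> \<le> (N * w1) * fst c + (N * w2) * snd c"
        using \<open>1 \<le> N\<close> mult_left_mono[of \<beta> "w1 * fst c + w2 * snd c" N] by (simp add: algebra_simps)
      also have "\<dots> \<le> real a * fst c + real b * snd c"
        using a b \<open>0 \<le> fst c\<close> \<open>0 \<le> snd c\<close> by (intro add_mono mult_right_mono) auto
      finally show ?thesis .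
    qed
    have "0 \<le> fst r" "0 \<le> snd r"
      using \<open>0 \<le> r\<close> by (auto simp: less_eq_prod_def)
    then have "real a * fst r + real b * snd r \<le> (N * w1 + 1) * fst r + (N * w2 + 1) * snd r"
      using a b by (intro add_mono mult_right_mono) auto
    also have "\<dots> = N * (w1 * fst r + w2 * snd r) + (fst r + snd r)"
      by (simp add: algebra_simps)
    also have "\<dots> < N * (w1 * fst r + w2 * snd r) + N * g"
      using \<open>fst r + snd r < N * g\<close> by simp
    also have "\<dots> = N * \<beta>"
      by (simp add: g_def algebra_simps)
    finally show "real a * fst r + real b * snd r < N * \<beta>" .
  qed (use a b in auto)
qed

lemma coprime_weights_separate:
  fixes a b :: nat and S :: "(real \<times> real) set"
  assumes "0 < a" "0 < b"
    and "\<And>c. c \<in> S \<Longrightarrow> K \<le> real a * fst c + real b * snd c"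
    and "real a * fst r + real b * snd r < K"
  obtains a' b' :: nat and K' where "0 < a'" "0 < b'" "coprime a' b'"
    "\<And>c. c \<in> S \<Longrightarrow> K' \<le> real a' * fst c + real b' * snd c"
    "real a' * fst r + real b' * snd r < K'"
proof -
  define d where "d = gcd a b"
  have "0 < d"
    using assms(1) by (simp add: d_def)
  obtain a' b' where ab: "a = d * a'" "b = d * b'" "coprime a' b'"
    using gcd_coprime_exists[of a b] assms(1) unfolding d_def by (auto simp: mult.commute)
  have "0 < a'" "0 < b'"
    using ab assms(1,2) by auto
  have scale: "real a * fst c + real b * snd c = d * (real a' * fst c + real b' * snd c)" for c
    by (simp add: ab algebra_simps)
  show ?thesis
  proof (rule that[OF \<open>0 < a'\<close> \<open>0 < b'\<close> \<open>coprime a' b'\<close>, of "K / d"])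
    show "K / d \<le> real a' * fst c + real b' * snd c" if "c \<in> S" for c
      using assms(3)[OF that] \<open>0 < d\<close> by (simp add: scale divide_le_eq mult.commute)
    show "real a' * fst r + real b' * snd r < K / d"
      using assms(4) \<open>0 < d\<close> by (simp add: scale less_divide_eq mult.commute)
  qed
qed

lemma omega_action_ge:
  assumes "plus_boundary \<Omega> \<noteq> {}"
    and "\<And>c. c \<in> plus_boundary \<Omega> \<Longrightarrow> K \<le> real a * fst c + real b * snd c"
  shows "K \<le> omega_action \<Omega> a b"
  unfolding omega_action_def using assms by (intro cInf_greatest) auto

lemma omega_action_le:
  assumes "toric_region \<Omega>" "r \<in> plus_boundary \<Omega>"
  shows "omega_action \<Omega> a b \<le> real a * fst r + real b * snd r"
  unfolding omega_action_def
proof (rule cInf_lower)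
  show "bdd_below ((\<lambda>p. real a * fst p + real b * snd p) ` plus_boundary \<Omega>)"
    by (rule bdd_belowI[of _ 0])
      (use plus_boundary_subset_quadrant[OF assms(1)] in \<open>auto simp: quadrant_def\<close>)
qed (use assms(2) in blast)

lemma concave_toric_region_open_part_subset:
  assumes concave_m: "concave_toric_region \<Omega>m" and concave_p: "concave_toric_region \<Omega>p"
    and action_le: "\<And>a b :: nat. 0 < a \<Longrightarrow> 0 < b \<Longrightarrow> coprime a b \<Longrightarrow>
           omega_action \<Omega>m a b \<le> omega_action \<Omega>p a b"
  shows "\<Omega>m \<inter> open_quadrant \<subseteq> \<Omega>p"
proof (rule ccontr)
  assume "\<not> ?thesis"
  then obtain p where "p \<in> \<Omega>m" "p \<in> open_quadrant" "p \<notin> \<Omega>p"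
    by blast
  have region_m: "toric_region \<Omega>m" and region_p: "toric_region \<Omega>p"
    using concave_m concave_p by (auto simp: concave_toric_region_def)
  obtain r where r: "r \<in> plus_boundary \<Omega>p" "fst r < fst p" "snd r < snd p"
    using toric_region_plus_boundary_below[OF region_p \<open>p \<in> open_quadrant\<close> \<open>p \<notin> \<Omega>p\<close>] by blast
  have "r \<notin> closure (quadrant - \<Omega>m)"
    using below_point_not_in_closure_complement[OF concave_m \<open>p \<in> \<Omega>m\<close> r(2,3)] .
  then obtain w1 w2 \<beta> where w: "0 \<le> w1" "0 \<le> w2" "w1 * fst r + w2 * snd r < \<beta>"
    and above: "\<And>x. x \<in> closure (quadrant - \<Omega>m) \<Longrightarrow> \<beta> < w1 * fst x + w2 * snd x"
    using separate_from_closure_complement_nonneg[OF concave_m] by blast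
  have "0 \<le> r"
    using plus_boundary_subset_quadrant[OF region_p] r(1) by (auto simp: mem_quadrant_iff)
  moreover have "0 \<le> c \<and> \<beta> \<le> w1 * fst c + w2 * snd c" if "c \<in> plus_boundary \<Omega>m" for c
    using that plus_boundary_subset_quadrant[OF region_m] above plus_boundary_subset_closure_complement
    by (fastforce simp: mem_quadrant_iff less_imp_le)
  ultimately obtain a b :: nat and K where "0 < a" "0 < b" "coprime a b"
    and "\<And>c. c \<in> plus_boundary \<Omega>m \<Longrightarrow> K \<le> real a * fst c + real b * snd c"
    and "real a * fst r + real b * snd r < K"
    using positive_integer_weights_separate[OF w(1,2) _ w(3)] coprime_weights_separate by metis
  then have "omega_action \<Omega>p a b < omega_action \<Omega>m a b"
    using omega_action_le[OF region_p r(1)] omega_action_ge[OF plus_boundary_nonempty[OF region_m]]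
    by (meson le_less_trans less_le_trans)
  then show False
    using action_le[OF \<open>0 < a\<close> \<open>0 < b\<close> \<open>coprime a b\<close>] by simp
qed

lemma toric_boundary_off_open_quadrant_le_corner:
  fixes a b :: real
  assumes "0 \<le> a" "0 \<le> b" "pathstart \<gamma> = (a, 0)" "pathfinish \<gamma> = (0, b)"
    and "\<forall>t\<in>{0<..<1}. 0 < fst (\<gamma> t) \<and> 0 < snd (\<gamma> t)"
    and "p \<in> closed_segment (0,0) (a,0) \<union> closed_segment (0,0) (0,b) \<union> path_image \<gamma>"
    and "p \<notin> open_quadrant"
  shows "p \<le> (a, 0) \<or> p \<le> (0, b)"
  using assms(6)
proof (elim UnE)
  assume "p \<in> closed_segment (0,0) (a,0)"
  then obtain u where "0 \<le> u" "u \<le> 1" "p = (u * a, 0)"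
    by (auto simp: in_segment)
  then show ?thesis
    using \<open>0 \<le> a\<close> by (simp add: mult_left_le_one_le)
next
  assume "p \<in> closed_segment (0,0) (0,b)"
  then obtain u where "0 \<le> u" "u \<le> 1" "p = (0, u * b)"
    by (auto simp: in_segment)
  then show ?thesis
    using \<open>0 \<le> b\<close> by (simp add: mult_left_le_one_le)
next
  assume "p \<in> path_image \<gamma>"
  then obtain t where "t \<in> {0..1}" "p = \<gamma> t"
    by (auto simp: path_image_def)
  moreover have "t \<notin> {0<..<1}"
    using assms(5,7) \<open>p = \<gamma> t\<close> by auto
  ultimately have "p = pathstart \<gamma> \<or> p = pathfinish \<gamma>"
    by (auto simp: pathstart_def pathfinish_def)
  then show ?thesis
    using assms(3,4) by auto
qed

lemma toric_region_le_closure_open_part: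
  assumes region: "toric_region \<Omega>" and "p \<in> \<Omega>"
  shows "\<exists>q\<in>closure (\<Omega> \<inter> open_quadrant). p \<le> q"
proof (cases "p \<in> open_quadrant")
  case True
  then show ?thesis
    using \<open>p \<in> \<Omega>\<close> closure_subset[of "\<Omega> \<inter> open_quadrant"] by blast
next
  case False
  obtain a b \<gamma> where "0 < a" "0 < b" "path \<gamma>" and ends: "pathstart \<gamma> = (a, 0)" "pathfinish \<gamma> = (0, b)"
    and inside: "\<forall>t\<in>{0<..<1}. 0 < fst (\<gamma> t) \<and> 0 < snd (\<gamma> t)"
    and frontier: "frontier \<Omega> = closed_segment (0,0) (a,0) \<union> closed_segment (0,0) (0,b) \<union> path_image \<gamma>"
    using region unfolding toric_region_def by blast
  have "path_image \<gamma> \<subseteq> \<Omega>"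
    using frontier frontier_subset_closed[OF toric_region_closed[OF region]] by blast
  then have "\<gamma> ` {0<..<1} \<subseteq> \<Omega> \<inter> open_quadrant"
    using inside by (auto simp: path_image_def)
  then have "\<gamma> ` {0<..<1} \<subseteq> closure (\<Omega> \<inter> open_quadrant)"
    using closure_subset by (rule order_trans)
  moreover have "continuous_on (closure {0<..<1}) \<gamma>"
    using \<open>path \<gamma>\<close> by (simp add: path_def)
  ultimately have "path_image \<gamma> \<subseteq> closure (\<Omega> \<inter> open_quadrant)"
    using image_closure_subset[of "{0<..<1}" \<gamma> "closure (\<Omega> \<inter> open_quadrant)"]
    by (simp add: path_image_def)
  then have corners: "(a, 0) \<in> closure (\<Omega> \<inter> open_quadrant)" "(0, b) \<in> closure (\<Omega> \<inter> open_quadrant)"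
    using pathstart_in_path_image[of \<gamma>] pathfinish_in_path_image[of \<gamma>] ends by auto
  have "p \<notin> interior \<Omega>"
    using False interior_mono[OF toric_region_subset_quadrant[OF region]] unfolding interior_quadrant by blast
  then have "p \<in> frontier \<Omega>"
    using \<open>p \<in> \<Omega>\<close> closure_subset[of \<Omega>] unfolding frontier_def by blast
  then have "p \<le> (a, 0) \<or> p \<le> (0, b)"
    using toric_boundary_off_open_quadrant_le_corner[OF _ _ ends inside _ False] \<open>0 < a\<close> \<open>0 < b\<close>
    unfolding frontier by simp
  then show ?thesis
    using corners by blast
qed

theorem lemma3p10:
  fixes \<Omega>m \<Omega>p :: "(real \<times> real) set"
  assumes "concave_toric_region \<Omega>m" and "concave_toric_region \<Omega>p"
    and "\<And>a b :: nat. a > 0 \<Longrightarrow> b > 0 \<Longrightarrow> coprime a b \<Longrightarrow>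
           omega_action \<Omega>m a b \<le> omega_action \<Omega>p a b"
  shows "\<Omega>m \<subseteq> \<Omega>p"
proof
  fix p
  assume "p \<in> \<Omega>m"
  have region_m: "toric_region \<Omega>m" and region_p: "toric_region \<Omega>p"
    using assms(1,2) by (auto simp: concave_toric_region_def)
  have "closure (\<Omega>m \<inter> open_quadrant) \<subseteq> \<Omega>p"
    using closure_minimal[OF concave_toric_region_open_part_subset[OF assms] toric_region_closed[OF region_p]] .
  moreover obtain q where "q \<in> closure (\<Omega>m \<inter> open_quadrant)" "p \<le> q"
    using toric_region_le_closure_open_part[OF region_m \<open>p \<in> \<Omega>m\<close>] by blast
  moreover have "0 \<le> p"
    using toric_region_subset_quadrant[OF region_m] \<open>p \<in> \<Omega>m\<close> by (auto simp: mem_quadrant_iff)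
  ultimately show "p \<in> \<Omega>p"
    using concave_toric_region_down_closed[OF assms(2)] by blast
qed

end
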